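(* Let $\mathfrak{f}_r$ be the free $2$-step nilpotent Lie algebra of rank $r$, with center $\mathfrak{z}=\Lambda^2(V)$. (i) If $r\equiv0\pmod 4$, then every complex structure on $\mathfrak{f}_r$ is $2$-step. (ii) If $r\equiv3\pmod 4$, then every complex structure $J$ on $\mathfrak{f}_r$ is $3$-step, and moreover $\mathfrak{z}\cap J\mathfrak{z}$ has codimension $1$ in $\mathfrak{z}$.
   Context: For a real vector space $V$ of dimension $r$, the free $2$-step nilpotent Lie algebra of rank $r$ is $\mathfrak{f}_r=V\oplus\Lambda^2(V)$ with Lie bracket $[v,w]=v\wedge w$ for $v,w\in V$ and $\Lambda^2(V)$ central. A complex structure on a real Lie algebra $\mathfrak{g}$ is a linear map $J:\mathfrak{g}\to\mathfrak{g}$ with $J^2=-I$ and $N_J(x,y):=[x,y]+J([Jx,y]+[x,Jy])-[Jx,Jy]=0$ for all $x,y\in\mathfrak{g}$. Given such $J$, define inductively $\mathfrak{a}_0(J)=0$ and $\mathfrak{a}_\ell(J)=\{x\in\mathfrak{g}: [x,\mathfrak{g}]\subset\mathfrak{a}_{\ell-1}(J)\text{ and }[Jx,\mathfrak{g}]\subset\mathfrak{a}_{\ell-1}(J)\}$ for $\ell\ge1$. $J$ is called nilpotent if $\mathfrak{a}_t(J)=\mathfrak{g}$ for some positive integer $t$, and $t$-step if $t$ is the smallest such integer. *)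

theory Defs
  imports "HOL-Analysis.Analysis"
begin

definition nijenhuis :: "('a::real_vector \<Rightarrow> 'a \<Rightarrow> 'a) \<Rightarrow> ('a \<Rightarrow> 'a) \<Rightarrow> 'a \<Rightarrow> 'a \<Rightarrow> 'a" where
  "nijenhuis br J x y = br x y + J (br (J x) y + br x (J y)) - br (J x) (J y)"

definition complex_structure :: "'a::real_vector set \<Rightarrow> ('a \<Rightarrow> 'a \<Rightarrow> 'a) \<Rightarrow> ('a \<Rightarrow> 'a) \<Rightarrow> bool" where
  "complex_structure g br J \<longleftrightarrow>
     (\<forall>x\<in>g. J x \<in> g) \<and>
     (\<forall>x\<in>g. \<forall>y\<in>g. J (x + y) = J x + J y) \<and>
     (\<forall>x\<in>g. \<forall>c::real. J (c *\<^sub>R x) = c *\<^sub>R J x) \<and>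
     (\<forall>x\<in>g. J (J x) = - x) \<and>
     (\<forall>x\<in>g. \<forall>y\<in>g. nijenhuis br J x y = 0)"

fun aseries :: "'a::real_vector set \<Rightarrow> ('a \<Rightarrow> 'a \<Rightarrow> 'a) \<Rightarrow> ('a \<Rightarrow> 'a) \<Rightarrow> nat \<Rightarrow> 'a set" where
  "aseries g br J 0 = {0}"
| "aseries g br J (Suc l) =
     {x \<in> g. (\<forall>y\<in>g. br x y \<in> aseries g br J l) \<and> (\<forall>y\<in>g. br (J x) y \<in> aseries g br J l)}"

definition nilpotent_cs :: "'a::real_vector set \<Rightarrow> ('a \<Rightarrow> 'a \<Rightarrow> 'a) \<Rightarrow> ('a \<Rightarrow> 'a) \<Rightarrow> bool" where
  "nilpotent_cs g br J \<longleftrightarrow> (\<exists>t>0. aseries g br J t = g)"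

definition step_cs :: "'a::real_vector set \<Rightarrow> ('a \<Rightarrow> 'a \<Rightarrow> 'a) \<Rightarrow> ('a \<Rightarrow> 'a) \<Rightarrow> nat \<Rightarrow> bool" where
  "step_cs g br J t \<longleftrightarrow> 0 < t \<and> aseries g br J t = g \<and> (\<forall>s. 0 < s \<and> s < t \<longrightarrow> aseries g br J s \<noteq> g)"

text \<open>Lambda^2(V) is realised as the antisymmetric r x r matrices, with v \<and> w = v w^T - w v^T.
  Elements of f_r are pairs (v, w) with v in V and w antisymmetric.\<close>

definition wedge :: "real^'r \<Rightarrow> real^'r \<Rightarrow> real^'r^'r" where
  "wedge v w = (\<chi> i j. v $ i * w $ j - v $ j * w $ i)"

definition free2_carrier :: "((real^'r) \<times> (real^'r^'r)) set" where
  "free2_carrier = {(v, w). transpose w = - w}"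

definition free2_bracket :: "(real^'r) \<times> (real^'r^'r) \<Rightarrow> (real^'r) \<times> (real^'r^'r) \<Rightarrow> (real^'r) \<times> (real^'r^'r)" where
  "free2_bracket x y = (0, wedge (fst x) (fst y))"

definition free2_center :: "((real^'r) \<times> (real^'r^'r)) set" where
  "free2_center = {(0, w) | w. transpose w = - w}"

end

theory Submission
  imports Defs
begin

(* Write Z for the centre and v for the V-component. For z in Z the Nijenhuis condition
   reduces to J [J z, y] = [J z, J y]; taking y in Z too gives [J z, J z'] = 0, so the
   vectors v(J z), z in Z, are pairwise proportional. Hence Z cap J Z = {z in Z. v(J z) = 0},
   which is a_1(J), has codimension at most one in Z. J-invariant subspaces are
   even-dimensional and dim f_r = r + dim Z, so Z cap J Z = Z exactly when r is even
   (only the parity of r is used). In that case every bracket lies in a_1(J) and J is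
   2-step. Otherwise [J z, y] lies in Z cap J Z for z in Z, so Z is contained in a_2(J)
   and a_3(J) = f_r, while a_2(J) is proper because the brackets span Z. *)

locale linear_complex_structure =
  fixes S :: "'a::euclidean_space set" and J :: "'a \<Rightarrow> 'a"
  assumes subspace: "subspace S"
    and maps_to: "x \<in> S \<Longrightarrow> J x \<in> S"
    and add: "x \<in> S \<Longrightarrow> y \<in> S \<Longrightarrow> J (x + y) = J x + J y"
    and scale: "x \<in> S \<Longrightarrow> J (c *\<^sub>R x) = c *\<^sub>R J x"
    and J_J: "x \<in> S \<Longrightarrow> J (J x) = - x"
begin

lemma zero: "J 0 = 0"
  using scale[of 0 0] subspace_0[OF subspace] by simp

lemma image_subset: "J ` S \<subseteq> S"
  using maps_to by blast

lemma minus: "x \<in> S \<Longrightarrow> J (- x) = - J x"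
  using scale[of x "-1"] by simp

lemma diff: "x \<in> S \<Longrightarrow> y \<in> S \<Longrightarrow> J (x - y) = J x - J y"
  using add[of x "- y"] minus[of y] subspace by (simp add: subspace_neg)

lemma subspace_image:
  assumes T: "subspace T" "T \<subseteq> S"
  shows "subspace (J ` T)"
  unfolding subspace_def
proof (intro conjI ballI allI)
  show "0 \<in> J ` T"
    using zero subspace_0[OF T(1)] by (metis image_eqI)
next
  fix u v
  assume "u \<in> J ` T" "v \<in> J ` T"
  then obtain x y where xy: "x \<in> T" "y \<in> T" "u = J x" "v = J y"
    by blast
  then have "u + v = J (x + y)"
    using T(2) by (simp add: add subset_iff)
  then show "u + v \<in> J ` T"
    using xy T(1) by (simp add: subspace_add)
next
  fix c u
  assume "u \<in> J ` T"
  then obtain x where x: "x \<in> T" "u = J x"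
    by blast
  then have "c *\<^sub>R u = J (c *\<^sub>R x)"
    using T(2) by (simp add: scale subset_iff)
  then show "c *\<^sub>R u \<in> J ` T"
    using x T(1) by (simp add: subspace_scale)
qed

lemma invariant_inter_image:
  assumes "subspace T" "T \<subseteq> S"
  shows "J ` (T \<inter> J ` T) \<subseteq> T \<inter> J ` T"
  using assms J_J by (auto simp: subspace_neg)

lemma invariant_span:
  assumes "B \<subseteq> S" and "J ` B \<subseteq> span B"
  shows "J ` span B \<subseteq> span B"
proof -
  have "subspace {y \<in> S. J y \<in> span B}"
    using subspace zero by (auto simp: subspace_def add scale span_add span_scale span_zero)
  moreover have "y \<in> {y \<in> S. J y \<in> span B}" if "y \<in> B" for y
    using that assms by (auto simp: span_base)
  ultimately show ?thesis
    by (auto dest: span_subspace_induct)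
qed

lemma J_notin_span_insert:
  assumes T: "subspace T" "T \<subseteq> S" "J ` T \<subseteq> T" and x: "x \<in> S" "x \<notin> T"
  shows "J x \<notin> span (insert x T)"
proof
  assume "J x \<in> span (insert x T)"
  moreover have "span T = T"
    using T(1) by simp
  ultimately obtain k where t: "J x - k *\<^sub>R x \<in> T"
    by (auto simp: span_insert)
  define t where "t = J x - k *\<^sub>R x"
  have "t \<in> S" "J t \<in> T"
    using t T(2,3) unfolding t_def by auto
  have "J t = - x - k *\<^sub>R J x"
    unfolding t_def using x(1) maps_to subspace by (simp add: diff scale J_J subspace_scale)
  then have "(1 + k\<^sup>2) *\<^sub>R x = - J t - k *\<^sub>R t"
    by (simp add: t_def algebra_simps power2_eq_square)
  also have "\<dots> \<in> T"
    using \<open>J t \<in> T\<close> t T(1) by (simp add: t_def subspace_diff subspace_neg subspace_scale)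
  finally have "inverse (1 + k\<^sup>2) *\<^sub>R (1 + k\<^sup>2) *\<^sub>R x \<in> T"
    using T(1) subspace_scale by blast
  moreover have "1 + k\<^sup>2 \<noteq> 0"
    using zero_le_power2[of k] by linarith
  ultimately show False
    using x(2) by simp
qed

lemma even_codim_invariant_subspace:
  assumes "subspace T" "T \<subseteq> S" "J ` T \<subseteq> T"
  shows "even (dim S - dim T)"
  using assms
proof (induction "dim S - dim T" arbitrary: T rule: less_induct)
  case (less T)
  show ?case
  proof (cases "S \<subseteq> T")
    case True
    with less.prems show ?thesis
      by auto
  next
    case False
    then obtain x where x: "x \<in> S" "x \<notin> T"
      by auto
    define T' where "T' = span (insert (J x) (insert x T))"
    have "x \<notin> span T"
      using x(2) less.prems(1) by (metis span_eq_iff)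
    then have "dim T' = dim T + 2"
      using J_notin_span_insert[OF less.prems x] by (simp add: T'_def dim_insert)
    moreover have "T' \<subseteq> S"
      using x maps_to less.prems(2) subspace by (simp add: T'_def span_minimal)
    moreover have "J ` T' \<subseteq> T'"
      unfolding T'_def using x less.prems(2,3) maps_to J_J
      by (intro invariant_span) (auto simp: span_base span_neg)
    moreover have "subspace T'"
      by (simp add: T'_def)
    ultimately have "even (dim S - dim T')"
      using less.hyps[of T'] dim_subset[of T' S] by linarith
    moreover have "dim S - dim T = (dim S - dim T') + 2"
      using \<open>dim T' = dim T + 2\<close> dim_subset[OF \<open>T' \<subseteq> S\<close>] by linarith
    ultimately show ?thesis
      by simp
  qed
qed

lemma even_dim_invariant_subspace:
  assumes "subspace T" "T \<subseteq> S" "J ` T \<subseteq> T"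
  shows "even (dim T)"
proof -
  have "even (dim S - dim T)"
    using even_codim_invariant_subspace assms .
  moreover have "even (dim S - dim {0::'a})"
    using subspace zero by (intro even_codim_invariant_subspace) (auto simp: subspace_0)
  ultimately show ?thesis
    using dim_subset[OF assms(2)] by auto
qed

end

lemma wedge_antisym: "transpose (wedge v w) = - wedge v w"
  by (simp add: wedge_def transpose_def vec_eq_iff)

lemma wedge_eq_0_imp_scaleR:
  assumes "wedge u u' = 0" "u \<noteq> 0"
  obtains c where "u' = c *\<^sub>R u"
proof -
  obtain i where i: "u $ i \<noteq> 0"
    using assms(2) by (metis vec_eq_iff zero_index)
  have "u $ i * u' $ j = u $ j * u' $ i" for j
    using arg_cong[OF assms(1), of "\<lambda>w. w $ i $ j"] by (simp add: wedge_def)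
  with i have "u' = (u' $ i / u $ i) *\<^sub>R u"
    by (simp add: vec_eq_iff field_simps)
  then show thesis ..
qed

lemma wedge_left_eq_0_iff:
  assumes "2 \<le> CARD('r)"
  shows "(\<forall>w. wedge v w = 0) \<longleftrightarrow> (v :: real^'r) = 0"
proof
  assume "\<forall>w. wedge v w = 0"
  show "v = 0"
  proof (rule ccontr)
    assume "v \<noteq> 0"
    then obtain i where i: "v $ i \<noteq> 0"
      by (metis vec_eq_iff zero_index)
    have "\<not> UNIV \<subseteq> {i}"
      using assms card_mono[of "{i}" UNIV] by auto
    then obtain j where "j \<noteq> i"
      by auto
    then have "wedge v (axis j 1) $ i $ j = v $ i"
      by (simp add: wedge_def axis_def)
    with i \<open>\<forall>w. wedge v w = 0\<close> show False
      by simp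
  qed
qed (simp add: wedge_def vec_eq_iff)

lemma antisym_eq_sum_wedge:
  assumes "transpose w = - w"
  shows "w = (\<Sum>i\<in>UNIV. wedge (axis i (1/2)) (w $ i))"
proof -
  have axis_delta: "(\<Sum>i\<in>UNIV. axis i (1/2) $ a * f i) = f a / 2" for a and f :: "_ \<Rightarrow> real"
  proof -
    have "(\<Sum>i\<in>UNIV. axis i (1/2) $ a * f i) = (\<Sum>i\<in>UNIV. if a = i then f i / 2 else 0)"
      by (intro sum.cong) (auto simp: axis_def)
    then show ?thesis
      by simp
  qed
  have "(\<Sum>i\<in>UNIV. wedge (axis i (1/2)) (w $ i)) $ a $ b = w $ a $ b" for a b
  proof -
    have "(\<Sum>i\<in>UNIV. wedge (axis i (1/2)) (w $ i)) $ a $ b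
        = (\<Sum>i\<in>UNIV. axis i (1/2) $ a * w $ i $ b) - (\<Sum>i\<in>UNIV. axis i (1/2) $ b * w $ i $ a)"
      by (simp add: wedge_def sum_subtractf)
    also have "\<dots> = w $ a $ b / 2 - w $ b $ a / 2"
      by (simp add: axis_delta)
    also have "\<dots> = w $ a $ b"
      using arg_cong[OF assms, of "\<lambda>w. w $ a $ b"] by (simp add: transpose_def)
    finally show ?thesis .
  qed
  then show ?thesis
    by (simp add: vec_eq_iff)
qed

lemma subspace_antisym: "subspace {w :: real^'n^'n. transpose w = - w}"
proof -
  have "transpose (x + y) = transpose x + transpose y" "transpose (0 :: real^'n^'n) = 0"
    for x y :: "real^'n^'n"
    by (simp_all add: transpose_def vec_eq_iff)
  then show ?thesis
    by (simp add: subspace_def transpose_scalar)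
qed

lemma free2_carrier_Times: "free2_carrier = UNIV \<times> {w. transpose w = - w}"
  by (auto simp: free2_carrier_def)

lemma free2_center_Times: "free2_center = {0} \<times> {w. transpose w = - w}"
  by (auto simp: free2_center_def)

lemma subspace_free2_carrier: "subspace free2_carrier"
  unfolding free2_carrier_Times by (intro subspace_Times subspace_UNIV subspace_antisym)

lemma subspace_free2_center: "subspace free2_center"
  unfolding free2_center_Times by (intro subspace_Times subspace_antisym) (simp add: subspace_0)

lemma dim_free2_carrier:
  "dim (free2_carrier :: ((real^'r) \<times> (real^'r^'r)) set)
     = CARD('r) + dim (free2_center :: ((real^'r) \<times> (real^'r^'r)) set)"
  unfolding free2_carrier_Times free2_center_Times by (simp add: dim_Times subspace_antisym)

lemma Pair_0_in_free2_carrier: "(v, 0) \<in> free2_carrier"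
  by (simp add: free2_carrier_def transpose_def vec_eq_iff)

lemma free2_center_iff: "x \<in> free2_center \<longleftrightarrow> x \<in> free2_carrier \<and> fst x = 0"
  by (cases x) (auto simp: free2_center_def free2_carrier_def)

lemma free2_bracket_in_center: "free2_bracket x y \<in> free2_center"
  by (simp add: free2_bracket_def free2_center_def wedge_antisym)

lemma free2_bracket_center_left: "x \<in> free2_center \<Longrightarrow> free2_bracket x y = 0"
  by (simp add: free2_bracket_def free2_center_iff zero_prod_def wedge_def vec_eq_iff)

lemma free2_bracket_center_right: "y \<in> free2_center \<Longrightarrow> free2_bracket x y = 0"
  by (simp add: free2_bracket_def free2_center_iff zero_prod_def wedge_def vec_eq_iff)

lemma free2_bracket_eq_0_iff:
  assumes "2 \<le> CARD('r)"
  shows "(\<forall>y\<in>free2_carrier. free2_bracket x y = 0) \<longleftrightarrow> fst (x :: (real^'r) \<times> (real^'r^'r)) = 0"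
proof -
  have "(\<forall>y\<in>free2_carrier. free2_bracket x y = 0) \<longleftrightarrow> (\<forall>v. wedge (fst x) v = 0)"
    using Pair_0_in_free2_carrier by (fastforce simp: free2_bracket_def zero_prod_def)
  then show ?thesis
    using wedge_left_eq_0_iff[OF assms] by simp
qed

lemma free2_center_subset_span_brackets:
  "free2_center \<subseteq> span {free2_bracket x y | x y. x \<in> free2_carrier \<and> y \<in> free2_carrier}"
proof
  fix z :: "(real^'r) \<times> (real^'r^'r)"
  assume "z \<in> free2_center"
  then obtain w where z: "z = (0, w)" and "transpose w = - w"
    by (auto simp: free2_center_def)
  then have "z = (\<Sum>i\<in>UNIV. free2_bracket (axis i (1/2), 0) (w $ i, 0))"
    using antisym_eq_sum_wedge by (simp add: free2_bracket_def prod_eq_iff fst_sum snd_sum)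
  also have "\<dots> \<in> span {free2_bracket x y | x y. x \<in> free2_carrier \<and> y \<in> free2_carrier}"
    using Pair_0_in_free2_carrier by (intro span_sum span_base) blast
  finally show "z \<in> span {free2_bracket x y | x y. x \<in> free2_carrier \<and> y \<in> free2_carrier}" .
qed

lemma complex_structure_imp_linear_complex_structure:
  fixes J :: "'a::euclidean_space \<Rightarrow> 'a"
  assumes "complex_structure g br J" "subspace g"
  shows "linear_complex_structure g J"
  using assms unfolding complex_structure_def linear_complex_structure_def by blast

lemma aseries_Suc_eq_carrier_iff:
  assumes "J ` g \<subseteq> g"
  shows "aseries g br J (Suc l) = g \<longleftrightarrow> (\<forall>x\<in>g. \<forall>y\<in>g. br x y \<in> aseries g br J l)"
  using assms by auto

lemma step_cs_2I:
  assumes "aseries g br J 1 \<noteq> g" "aseries g br J 2 = g"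
  shows "step_cs g br J 2"
  unfolding step_cs_def
proof (intro conjI allI impI)
  fix s :: nat
  assume "0 < s \<and> s < 2"
  then have "s = 1"
    by simp
  with assms(1) show "aseries g br J s \<noteq> g"
    by simp
qed (simp_all add: assms(2))

lemma step_cs_3I:
  assumes "aseries g br J 1 \<noteq> g" "aseries g br J 2 \<noteq> g" "aseries g br J 3 = g"
  shows "step_cs g br J 3"
  unfolding step_cs_def
proof (intro conjI allI impI)
  fix s :: nat
  assume "0 < s \<and> s < 3"
  then have "s = 1 \<or> s = 2"
    by linarith
  with assms(1,2) show "aseries g br J s \<noteq> g"
    by (elim disjE) simp_all
qed (simp_all add: assms(3))

locale free2_complex_structure =
  fixes J :: "(real^'r) \<times> (real^'r^'r) \<Rightarrow> (real^'r) \<times> (real^'r^'r)"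
  assumes complex_structure: "complex_structure free2_carrier free2_bracket J"
    and card_ge_2: "2 \<le> CARD('r)"
begin

sublocale J: linear_complex_structure free2_carrier J
  using complex_structure subspace_free2_carrier
  by (rule complex_structure_imp_linear_complex_structure)

lemma J_bracket_J_center:
  assumes "x \<in> free2_center" "y \<in> free2_carrier"
  shows "J (free2_bracket (J x) y) = free2_bracket (J x) (J y)"
proof -
  have "nijenhuis free2_bracket J x y = 0"
    using complex_structure assms by (auto simp: complex_structure_def free2_center_iff)
  moreover have "free2_bracket x z = 0" for z
    using assms(1) by (rule free2_bracket_center_left)
  ultimately show ?thesis
    by (simp add: nijenhuis_def)
qed

lemma wedge_fst_J_center:
  assumes "x \<in> free2_center" "y \<in> free2_center"
  shows "wedge (fst (J x)) (fst (J y)) = 0"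
proof -
  have "free2_bracket (J x) (J y) = J (free2_bracket (J x) y)"
    using assms by (simp add: J_bracket_J_center free2_center_iff)
  also have "\<dots> = 0"
    using assms(2) by (simp add: free2_bracket_center_right J.zero)
  finally show ?thesis
    by (simp add: free2_bracket_def zero_prod_def)
qed

lemma center_inter_J_center: "free2_center \<inter> J ` free2_center = {x \<in> free2_center. fst (J x) = 0}"
proof (intro set_eqI iffI)
  fix x
  assume "x \<in> free2_center \<inter> J ` free2_center"
  then obtain y where "y \<in> free2_center" "x = J y" "x \<in> free2_center"
    by auto
  then show "x \<in> {x \<in> free2_center. fst (J x) = 0}"
    by (auto simp: free2_center_iff J.J_J)
next
  fix x
  assume x: "x \<in> {x \<in> free2_center. fst (J x) = 0}"
  then have "- J x \<in> free2_center"
    by (auto simp: free2_center_iff J.maps_to subspace_neg subspace_free2_carrier)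
  moreover have "x = J (- J x)"
    using x by (simp add: free2_center_iff J.minus J.maps_to J.J_J)
  ultimately show "x \<in> free2_center \<inter> J ` free2_center"
    using x by blast
qed

lemma subspace_center_inter_J_center: "subspace (free2_center \<inter> J ` free2_center)"
  by (intro subspace_inter subspace_free2_center J.subspace_image) (auto simp: free2_center_iff)

lemma bracket_J_center_in_center_inter_J_center:
  assumes "x \<in> free2_center" "y \<in> free2_carrier"
  shows "free2_bracket (J x) y \<in> free2_center \<inter> J ` free2_center"
proof -
  have "fst (J (free2_bracket (J x) y)) = 0"
    using J_bracket_J_center[OF assms] by (simp add: free2_bracket_def)
  then show ?thesis
    using free2_bracket_in_center by (simp add: center_inter_J_center)
qed

lemma aseries_1: "aseries free2_carrier free2_bracket J 1 = free2_center \<inter> J ` free2_center"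
  unfolding One_nat_def aseries.simps
  using free2_bracket_eq_0_iff[OF card_ge_2] J.maps_to
  by (auto simp: center_inter_J_center free2_center_iff)

lemma aseries_1_neq_carrier: "aseries free2_carrier free2_bracket J 1 \<noteq> free2_carrier"
proof -
  obtain y where "y \<in> free2_carrier" "free2_bracket (1 :: real^'r, 0 :: real^'r^'r) y \<noteq> 0"
    using free2_bracket_eq_0_iff[OF card_ge_2, of "(1, 0)"] by auto
  then show ?thesis
    unfolding One_nat_def aseries_Suc_eq_carrier_iff[OF J.image_subset]
    using Pair_0_in_free2_carrier by auto
qed

lemma center_subset_aseries_2: "free2_center \<subseteq> aseries free2_carrier free2_bracket J 2"
proof
  fix x :: "(real^'r) \<times> (real^'r^'r)"
  assume x: "x \<in> free2_center"
  have "free2_bracket x y \<in> aseries free2_carrier free2_bracket J 1" for y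
    unfolding aseries_1 free2_bracket_center_left[OF x]
    using subspace_center_inter_J_center by (rule subspace_0)
  moreover have "free2_bracket (J x) y \<in> aseries free2_carrier free2_bracket J 1"
    if "y \<in> free2_carrier" for y
    unfolding aseries_1 using x that by (rule bracket_J_center_in_center_inter_J_center)
  moreover have "x \<in> free2_carrier"
    using x by (simp add: free2_center_iff)
  ultimately have "x \<in> aseries free2_carrier free2_bracket J (Suc 1)"
    unfolding aseries.simps(2) by blast
  then show "x \<in> aseries free2_carrier free2_bracket J 2"
    by (simp only: Suc_1)
qed

lemma aseries_2_eq_carrier_iff:
  "aseries free2_carrier free2_bracket J 2 = free2_carrier
     \<longleftrightarrow> free2_center \<inter> J ` free2_center = free2_center"
proof -
  have "aseries free2_carrier free2_bracket J (Suc 1) = free2_carrier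
      \<longleftrightarrow> (\<forall>x\<in>free2_carrier. \<forall>y\<in>free2_carrier. free2_bracket x y \<in> aseries free2_carrier free2_bracket J 1)"
    by (rule aseries_Suc_eq_carrier_iff[OF J.image_subset])
  then have "aseries free2_carrier free2_bracket J 2 = free2_carrier
      \<longleftrightarrow> (\<forall>x\<in>free2_carrier. \<forall>y\<in>free2_carrier. free2_bracket x y \<in> free2_center \<inter> J ` free2_center)"
    by (simp only: Suc_1 aseries_1)
  also have "\<dots> \<longleftrightarrow> free2_center \<inter> J ` free2_center = free2_center"
  proof
    assume "\<forall>x\<in>free2_carrier. \<forall>y\<in>free2_carrier. free2_bracket x y \<in> free2_center \<inter> J ` free2_center"
    then have "span {free2_bracket x y | x y. x \<in> free2_carrier \<and> y \<in> free2_carrier}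
        \<subseteq> free2_center \<inter> J ` free2_center"
      using subspace_center_inter_J_center by (intro span_minimal) blast+
    with free2_center_subset_span_brackets
    have "free2_center \<subseteq> free2_center \<inter> J ` free2_center"
      by (rule subset_trans)
    then show "free2_center \<inter> J ` free2_center = free2_center"
      by (rule subset_antisym[OF Int_lower1])
  next
    assume "free2_center \<inter> J ` free2_center = free2_center"
    then show "\<forall>x\<in>free2_carrier. \<forall>y\<in>free2_carrier. free2_bracket x y \<in> free2_center \<inter> J ` free2_center"
      by (simp add: free2_bracket_in_center)
  qed
  finally show ?thesis .
qed

lemma aseries_3: "aseries free2_carrier free2_bracket J 3 = free2_carrier"
proof -
  have "\<forall>x\<in>free2_carrier. \<forall>y\<in>free2_carrier. free2_bracket x y \<in> aseries free2_carrier free2_bracket J 2"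
    using center_subset_aseries_2 free2_bracket_in_center by blast
  then have "aseries free2_carrier free2_bracket J (Suc 2) = free2_carrier"
    by (rule aseries_Suc_eq_carrier_iff[OF J.image_subset, THEN iffD2])
  then show ?thesis
    by (simp only: numeral_3_eq_3 numeral_2_eq_2)
qed

lemma even_dim_center_inter_J_center: "even (dim (free2_center \<inter> J ` free2_center))"
  using subspace_center_inter_J_center subspace_free2_center
  by (intro J.even_dim_invariant_subspace J.invariant_inter_image)
    (auto simp: free2_center_iff)

lemma center_inter_J_center_codim_1:
  assumes "free2_center \<inter> J ` free2_center \<noteq> free2_center"
  shows "dim (free2_center :: ((real^'r) \<times> (real^'r^'r)) set)
           = dim (free2_center \<inter> J ` free2_center) + 1"
proof -
  let ?Z1 = "free2_center \<inter> J ` free2_center"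
  obtain x0 where x0: "x0 \<in> free2_center" "fst (J x0) \<noteq> 0"
    using assms by (auto simp: center_inter_J_center)
  have "x \<in> span (insert x0 ?Z1)" if x: "x \<in> free2_center" for x
  proof -
    obtain c where c: "fst (J x) = c *\<^sub>R fst (J x0)"
      using wedge_eq_0_imp_scaleR[OF wedge_fst_J_center[OF x0(1) x] x0(2)] .
    have "x - c *\<^sub>R x0 \<in> free2_center"
      using x x0(1) subspace_free2_center by (meson subspace_diff subspace_scale)
    moreover have "J (x - c *\<^sub>R x0) = J x - c *\<^sub>R J x0"
      using x x0(1) by (simp add: free2_center_iff J.diff J.scale subspace_scale[OF subspace_free2_carrier])
    ultimately have "x - c *\<^sub>R x0 \<in> ?Z1"
      using c by (simp add: center_inter_J_center)
    then show ?thesis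
      unfolding span_insert by (blast intro: span_base)
  qed
  then have "span free2_center = span (insert x0 ?Z1)"
    unfolding span_eq using x0(1) by (auto intro: span_base)
  then have "dim (free2_center :: ((real^'r) \<times> (real^'r^'r)) set) = dim (insert x0 ?Z1)"
    by (metis dim_span)
  also have "\<dots> = dim ?Z1 + 1"
  proof -
    have "x0 \<notin> span ?Z1"
      unfolding span_eq_iff[THEN iffD2, OF subspace_center_inter_J_center]
      using x0 by (simp add: center_inter_J_center)
    then show ?thesis
      by (simp add: dim_insert)
  qed
  finally show ?thesis .
qed

lemma even_card_iff_center_inter_J_center:
  "even CARD('r) \<longleftrightarrow> free2_center \<inter> J ` free2_center = free2_center"
proof -
  have "even (dim (free2_carrier :: ((real^'r) \<times> (real^'r^'r)) set))"
    using subspace_free2_carrier J.maps_to by (intro J.even_dim_invariant_subspace) auto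
  then have "even (CARD('r) + dim (free2_center :: ((real^'r) \<times> (real^'r^'r)) set))"
    by (simp add: dim_free2_carrier)
  then show ?thesis
    using even_dim_center_inter_J_center center_inter_J_center_codim_1
    by (cases "free2_center \<inter> J ` free2_center = free2_center") auto
qed

lemma two_step:
  assumes "free2_center \<inter> J ` free2_center = free2_center"
  shows "step_cs free2_carrier free2_bracket J 2"
  using aseries_1_neq_carrier aseries_2_eq_carrier_iff[THEN iffD2, OF assms] by (rule step_cs_2I)

lemma three_step:
  assumes "free2_center \<inter> J ` free2_center \<noteq> free2_center"
  shows "step_cs free2_carrier free2_bracket J 3"
proof (rule step_cs_3I[OF aseries_1_neq_carrier _ aseries_3])
  show "aseries free2_carrier free2_bracket J 2 \<noteq> free2_carrier"
    using aseries_2_eq_carrier_iff assms by simp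
qed

end

theorem mainTheorem9:
  shows "(CARD('r) mod 4 = 0 \<longrightarrow>
            (\<forall>J. complex_structure (free2_carrier :: ((real^'r) \<times> (real^'r^'r)) set) free2_bracket J
                 \<longrightarrow> step_cs (free2_carrier :: ((real^'r) \<times> (real^'r^'r)) set) free2_bracket J 2))
       \<and> (CARD('r) mod 4 = 3 \<longrightarrow>
            (\<forall>J. complex_structure (free2_carrier :: ((real^'r) \<times> (real^'r^'r)) set) free2_bracket J
                 \<longrightarrow> step_cs (free2_carrier :: ((real^'r) \<times> (real^'r^'r)) set) free2_bracket J 3
                     \<and> dim (free2_center :: ((real^'r) \<times> (real^'r^'r)) set)
                         = dim ((free2_center :: ((real^'r) \<times> (real^'r^'r)) set) \<inter> J ` free2_center) + 1))"
proof (rule conjI; intro allI impI)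
  fix J :: "(real^'r) \<times> (real^'r^'r) \<Rightarrow> (real^'r) \<times> (real^'r^'r)"
  assume r: "CARD('r) mod 4 = 0" and cs: "complex_structure free2_carrier free2_bracket J"
  have "0 < CARD('r)"
    by simp
  with r have "2 \<le> CARD('r)"
    by presburger
  with cs interpret free2_complex_structure J
    by unfold_locales
  have "even CARD('r)"
    using r by presburger
  then show "step_cs free2_carrier free2_bracket J 2"
    using even_card_iff_center_inter_J_center two_step by blast
next
  fix J :: "(real^'r) \<times> (real^'r^'r) \<Rightarrow> (real^'r) \<times> (real^'r^'r)"
  assume r: "CARD('r) mod 4 = 3" and cs: "complex_structure free2_carrier free2_bracket J"
  have "2 \<le> CARD('r)"
    using r by presburger
  with cs interpret free2_complex_structure J
    by unfold_locales
  have "odd CARD('r)"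
    using r by presburger
  then have "free2_center \<inter> J ` free2_center \<noteq> free2_center"
    using even_card_iff_center_inter_J_center by blast
  then show "step_cs free2_carrier free2_bracket J 3
      \<and> dim (free2_center :: ((real^'r) \<times> (real^'r^'r)) set) = dim (free2_center \<inter> J ` free2_center) + 1"
    using three_step center_inter_J_center_codim_1 by blast
qed

end
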